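(* Let $r,m\in\mathbb{N}$, let $E\subset\mathbb{R}^r$ be a compact domain and let $f:E\to\mathbb{R}^m$ be a solvable function. Then there exists a countable ordinal $\alpha<\omega_1$ such that $E_\alpha=\emptyset$, where $\{E_\gamma\}_\gamma$ is the sequence of $f$-removed sets on $E$.
   Context: A compact domain is a nonempty connected compact subset of $\mathbb{R}^r$; $\omega_1$ is the first uncountable ordinal. For $S\subseteq\mathbb{R}^r$ and $g:S\to\mathbb{R}^m$, $D_g$ is the set of points of $S$ at which $g$ is discontinuous with respect to the subspace topology of $S$. The sequence of $f$-removed sets on $E$: $E_0=E$; $E_{\alpha+1}=D_{f\restriction_{E_\alpha}}$; $E_\lambda=\bigcap_{\beta<\lambda}E_\beta$ for limit $\lambda$. A function $f:E\to\mathbb{R}^m$ is solvable if it is of class Baire one (a pointwise limit on $E$ of a sequence of continuous functions $E\to\mathbb{R}^m$) and for every closed set $K\subseteq E$ the set $D_{f\restriction_K}$ is closed. *)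

theory Defs
  imports "HOL-Analysis.Analysis"
begin

definition discont_set :: "('a::metric_space \<Rightarrow> 'b::metric_space) \<Rightarrow> 'a set \<Rightarrow> 'a set" where
  "discont_set g S = {x \<in> S. \<not> continuous (at x within S) g}"

definition compact_domain :: "'a::euclidean_space set \<Rightarrow> bool" where
  "compact_domain E \<longleftrightarrow> E \<noteq> {} \<and> connected E \<and> compact E"

definition baire_one_on :: "'a::euclidean_space set \<Rightarrow> ('a \<Rightarrow> 'b::euclidean_space) \<Rightarrow> bool" where
  "baire_one_on E f \<longleftrightarrow>
     (\<exists>g :: nat \<Rightarrow> 'a \<Rightarrow> 'b. (\<forall>n. continuous_on E (g n)) \<and>
        (\<forall>x\<in>E. (\<lambda>n. g n x) \<longlonglongrightarrow> f x))"

definition solvable :: "'a::euclidean_space set \<Rightarrow> ('a \<Rightarrow> 'b::euclidean_space) \<Rightarrow> bool" where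
  "solvable E f \<longleftrightarrow> baire_one_on E f \<and>
     (\<forall>K. closed K \<and> K \<subseteq> E \<longrightarrow> closed (discont_set f K))"

text \<open>Ordinals are represented by elements of a well-order r (reflexive, as in Main);
  the ordinal of an element a is the order type of its strict initial segment.
  S is the sequence of f-removed sets on E indexed along r:
  S at the minimum is E, at a successor of b it is D of f restricted to S b, and
  at a limit it is the intersection of all earlier stages.\<close>
definition is_imm_pred :: "'i rel \<Rightarrow> 'i \<Rightarrow> 'i \<Rightarrow> bool" where
  "is_imm_pred r b a \<longleftrightarrow> (b, a) \<in> r \<and> b \<noteq> a \<and>
     (\<forall>c. (c, a) \<in> r \<and> c \<noteq> a \<longrightarrow> (c, b) \<in> r)"

definition removed_seq ::
  "('a::euclidean_space \<Rightarrow> 'b::euclidean_space) \<Rightarrow> 'a set \<Rightarrow> 'i rel \<Rightarrow> ('i \<Rightarrow> 'a set) \<Rightarrow> bool" where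
  "removed_seq f E r S \<longleftrightarrow>
     (\<forall>a\<in>Field r.
        ((\<forall>b. (b, a) \<in> r \<longrightarrow> b = a) \<longrightarrow> S a = E) \<and>
        (\<forall>b. is_imm_pred r b a \<longrightarrow> S a = discont_set f (S b)) \<and>
        ((\<exists>b. (b, a) \<in> r \<and> b \<noteq> a) \<and> \<not> (\<exists>b. is_imm_pred r b a) \<longrightarrow>
            S a = (\<Inter>{S b | b. (b, a) \<in> r \<and> b \<noteq> a})))"

end

theory Submission
  imports Defs
begin

(*
  By the Baire category theorem, a pointwise limit of continuous functions on a
  nonempty closed set X is continuous (relative to X) at some point of X, so D(X), the set of
  discontinuity points of f restricted to X, is a proper subset of X; solvability keeps every
  removed set closed. The removed sets form the tower generated from E by D and by intersections
  of nonempty subfamilies. Such a tower is well-ordered by reverse inclusion, and it is countable: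
  a basic open set meeting X but missing the closed set D(X) determines X. Its least element is a
  fixed point of D, hence empty. Enumerating the tower transports reverse inclusion to a
  well-order on the natural numbers that indexes the removed sets.
*)

section \<open>Continuity points of Baire-one functions\<close>

definition small_oscillation_set :: "'a::metric_space set \<Rightarrow> ('a \<Rightarrow> 'b::metric_space) \<Rightarrow> real \<Rightarrow> 'a set" where
  "small_oscillation_set K f \<epsilon> =
     {x \<in> K. \<exists>\<eta>>0. \<forall>z\<in>K. \<forall>w\<in>K. dist z x < \<eta> \<longrightarrow> dist w x < \<eta> \<longrightarrow> dist (f z) (f w) \<le> \<epsilon>}"

lemma openin_small_oscillation_set: "openin (top_of_set K) (small_oscillation_set K f \<epsilon>)"
  unfolding openin_euclidean_subtopology_iff
proof (intro conjI ballI)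
  show "small_oscillation_set K f \<epsilon> \<subseteq> K" unfolding small_oscillation_set_def by auto
  fix x assume "x \<in> small_oscillation_set K f \<epsilon>"
  then obtain \<eta> where "\<eta> > 0"
    and osc: "\<And>z w. z \<in> K \<Longrightarrow> w \<in> K \<Longrightarrow> dist z x < \<eta> \<Longrightarrow> dist w x < \<eta> \<Longrightarrow> dist (f z) (f w) \<le> \<epsilon>"
    unfolding small_oscillation_set_def by blast
  have "x' \<in> small_oscillation_set K f \<epsilon>" if "x' \<in> K" "dist x' x < \<eta>/2" for x'
  proof -
    have "dist (f z) (f w) \<le> \<epsilon>"
      if "z \<in> K" "w \<in> K" "dist z x' < \<eta>/2" "dist w x' < \<eta>/2" for z w
      using osc[of z w] dist_triangle[of z x x'] dist_triangle[of w x x'] \<open>dist x' x < \<eta>/2\<close> that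
      by linarith
    then show ?thesis
      unfolding small_oscillation_set_def using \<open>x' \<in> K\<close> \<open>\<eta> > 0\<close> half_gt_zero by blast
  qed
  then show "\<exists>e>0. \<forall>x'\<in>K. dist x' x < e \<longrightarrow> x' \<in> small_oscillation_set K f \<epsilon>"
    using \<open>\<eta> > 0\<close> half_gt_zero by blast
qed

lemma continuous_within_if_small_oscillation:
  assumes "\<And>\<epsilon>. \<epsilon> > 0 \<Longrightarrow> x \<in> small_oscillation_set K f \<epsilon>"
  shows "continuous (at x within K) f"
  unfolding continuous_within_eps_delta
proof (intro allI impI)
  fix e :: real assume "e > 0"
  then obtain \<eta> where "\<eta> > 0" "x \<in> K"
    and osc: "\<forall>z\<in>K. \<forall>w\<in>K. dist z x < \<eta> \<longrightarrow> dist w x < \<eta> \<longrightarrow> dist (f z) (f w) \<le> e/2"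
    using assms[of "e/2"] unfolding small_oscillation_set_def by auto
  then have "\<forall>x'\<in>K. dist x' x < \<eta> \<longrightarrow> dist (f x') (f x) < e"
    using \<open>e > 0\<close> by fastforce
  then show "\<exists>d>0. \<forall>x'\<in>K. dist x' x < d \<longrightarrow> dist (f x') (f x) < e"
    using \<open>\<eta> > 0\<close> by blast
qed

lemma Baire_closed_cover:
  fixes S :: "'a::{real_normed_vector,heine_borel} set"
  assumes "closed S" "S \<noteq> {}" and closed: "\<And>N::nat. closed (F N)" and cover: "S \<subseteq> (\<Union>N. F N)"
  shows "\<exists>N y W. y \<in> S \<and> open W \<and> y \<in> W \<and> W \<inter> S \<subseteq> F N"
proof (rule ccontr)
  assume no_piece: "\<not> ?thesis"
  have "S \<subseteq> closure (\<Inter>N. S - F N)"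
  proof (rule Baire[OF \<open>closed S\<close>])
    fix T assume "T \<in> range (\<lambda>N. S - F N)"
    then obtain N where T: "T = S - F N" by auto
    have "openin (top_of_set S) T"
      unfolding T using closed by (simp add: Diff_eq openin_open_Int open_Compl)
    moreover have "y \<in> closure T" if "y \<in> S" for y
    proof (rule ccontr)
      assume "y \<notin> closure T"
      then obtain W where "open W" "y \<in> W" "T \<inter> W = {}"
        unfolding closure_iff_nhds_not_empty by blast
      then show False using no_piece \<open>y \<in> S\<close> unfolding T by blast
    qed
    ultimately show "openin (top_of_set S) T \<and> S \<subseteq> closure T" by blast
  qed simp
  moreover have "(\<Inter>N. S - F N) = {}" using cover by blast
  ultimately show False using \<open>S \<noteq> {}\<close> by (metis closure_empty subset_empty)
qed

lemma pointwise_limit_uniformly_close_on_piece: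
  fixes S :: "'a::{real_normed_vector,heine_borel} set" and f :: "'a \<Rightarrow> 'b::metric_space"
  assumes "closed S" "S \<noteq> {}" and cont: "\<And>n. continuous_on S (g n)"
    and lim: "\<And>x. x \<in> S \<Longrightarrow> (\<lambda>n. g n x) \<longlonglongrightarrow> f x" and "\<epsilon> > 0"
  shows "\<exists>N y W. y \<in> S \<and> open W \<and> y \<in> W \<and> (\<forall>z\<in>W \<inter> S. dist (f z) (g N z) \<le> \<epsilon>)"
proof -
  define F where "F N = {x \<in> S. \<forall>n\<ge>N. \<forall>m\<ge>N. dist (g n x) (g m x) \<le> \<epsilon>}" for N
  have "closed (F N)" for N
  proof -
    have "F N = S \<inter> (\<Inter>n\<in>{N..}. \<Inter>m\<in>{N..}. {x \<in> S. dist (g n x) (g m x) \<le> \<epsilon>})"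
      unfolding F_def by auto
    moreover have "closed {x \<in> S. dist (g n x) (g m x) \<le> \<epsilon>}" for n m
      by (rule continuous_on_closed_Collect_le[OF continuous_on_dist[OF cont cont]
            continuous_on_const \<open>closed S\<close>])
    ultimately show ?thesis
      using \<open>closed S\<close> by (simp only:) (intro closed_Int closed_INT ballI)
  qed
  moreover have "S \<subseteq> (\<Union>N. F N)"
  proof
    fix x assume "x \<in> S"
    then have "Cauchy (\<lambda>n. g n x)" using lim LIMSEQ_imp_Cauchy by blast
    then obtain N where "\<forall>m\<ge>N. \<forall>n\<ge>N. dist (g m x) (g n x) < \<epsilon>"
      using metric_CauchyD \<open>\<epsilon> > 0\<close> by blast
    then have "x \<in> F N" unfolding F_def using \<open>x \<in> S\<close> by (auto intro: less_imp_le)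
    then show "x \<in> (\<Union>N. F N)" by blast
  qed
  ultimately obtain N y W where piece: "y \<in> S" "open W" "y \<in> W" "W \<inter> S \<subseteq> F N"
    using Baire_closed_cover[OF \<open>closed S\<close> \<open>S \<noteq> {}\<close>] by metis
  have "dist (f z) (g N z) \<le> \<epsilon>" if "z \<in> W \<inter> S" for z
  proof (rule LIMSEQ_le_const2)
    show "(\<lambda>n. dist (g n z) (g N z)) \<longlonglongrightarrow> dist (f z) (g N z)"
      using that by (intro tendsto_intros lim) blast
    show "\<exists>M. \<forall>n\<ge>M. dist (g n z) (g N z) \<le> \<epsilon>"
      using piece(4) that unfolding F_def by blast
  qed
  then show ?thesis using piece by blast
qed

lemma small_oscillation_set_if_close_to_continuous:
  assumes "y \<in> K" "\<eta> > 0" "\<epsilon> > 0" and cont: "continuous (at y within K) g"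
    and close: "\<And>z. z \<in> K \<Longrightarrow> dist z y < \<eta> \<Longrightarrow> dist (f z) (g z) \<le> \<epsilon>/3"
  shows "y \<in> small_oscillation_set K f \<epsilon>"
proof -
  obtain \<eta>' where "\<eta>' > 0" and \<eta>': "\<forall>z\<in>K. dist z y < \<eta>' \<longrightarrow> dist (g z) (g y) < \<epsilon>/6"
    using cont \<open>\<epsilon> > 0\<close> unfolding continuous_within_eps_delta by (meson divide_pos_pos zero_less_numeral)
  have near: "dist (f z) (g y) < \<epsilon>/2" if "z \<in> K" "dist z y < min \<eta> \<eta>'" for z
    using close[of z] \<eta>' dist_triangle[of "f z" "g y" "g z"] that by fastforce
  have "\<forall>z\<in>K. \<forall>w\<in>K. dist z y < min \<eta> \<eta>' \<longrightarrow> dist w y < min \<eta> \<eta>' \<longrightarrow> dist (f z) (f w) \<le> \<epsilon>"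
  proof (intro ballI impI)
    fix z w assume "z \<in> K" "w \<in> K" "dist z y < min \<eta> \<eta>'" "dist w y < min \<eta> \<eta>'"
    then show "dist (f z) (f w) \<le> \<epsilon>"
      using near[of z] near[of w] dist_triangle2[of "f z" "f w" "g y"] by linarith
  qed
  moreover have "min \<eta> \<eta>' > 0" using \<open>\<eta> > 0\<close> \<open>\<eta>' > 0\<close> by simp
  ultimately show ?thesis unfolding small_oscillation_set_def using \<open>y \<in> K\<close> by blast
qed

lemma dense_small_oscillation_set:
  fixes K :: "'a::{real_normed_vector,heine_borel} set" and f :: "'a \<Rightarrow> 'b::metric_space"
  assumes "closed K" and cont: "\<And>n. continuous_on K (g n)"
    and lim: "\<And>x. x \<in> K \<Longrightarrow> (\<lambda>n. g n x) \<longlonglongrightarrow> f x" and "\<epsilon> > 0"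
  shows "K \<subseteq> closure (small_oscillation_set K f \<epsilon>)"
proof
  fix x0 assume "x0 \<in> K"
  show "x0 \<in> closure (small_oscillation_set K f \<epsilon>)"
    unfolding closure_approachable
  proof (intro allI impI)
    fix \<delta> :: real assume "\<delta> > 0"
    define S where "S = closure (K \<inter> ball x0 \<delta>)"
    have "S \<subseteq> K" unfolding S_def using \<open>closed K\<close> by (simp add: closure_minimal)
    have "S \<noteq> {}" unfolding S_def using \<open>x0 \<in> K\<close> \<open>\<delta> > 0\<close> by auto
    have "closed S" "\<And>n. continuous_on S (g n)" "\<And>x. x \<in> S \<Longrightarrow> (\<lambda>n. g n x) \<longlonglongrightarrow> f x"
      using continuous_on_subset[OF cont \<open>S \<subseteq> K\<close>] lim \<open>S \<subseteq> K\<close> by (auto simp: S_def)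
    then obtain N y W where "y \<in> S" "open W" "y \<in> W"
      and close: "\<forall>z\<in>W \<inter> S. dist (f z) (g N z) \<le> \<epsilon>/3"
      using pointwise_limit_uniformly_close_on_piece[OF _ \<open>S \<noteq> {}\<close>, of g f "\<epsilon>/3"] \<open>\<epsilon> > 0\<close>
      by (meson divide_pos_pos zero_less_numeral)
    then obtain y' where y': "y' \<in> K" "y' \<in> ball x0 \<delta>" "y' \<in> W"
      unfolding S_def closure_iff_nhds_not_empty by blast
    obtain \<eta> where "\<eta> > 0" and \<eta>: "ball y' \<eta> \<subseteq> W \<inter> ball x0 \<delta>"
      using openE[of "W \<inter> ball x0 \<delta>" y'] \<open>open W\<close> y' by blast
    have "dist (f z) (g N z) \<le> \<epsilon>/3" if "z \<in> K" "dist z y' < \<eta>" for z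
    proof -
      have "z \<in> W \<inter> S"
        using \<eta> that unfolding S_def by (auto simp: dist_commute intro: closure_subset[THEN subsetD])
      then show ?thesis using close by blast
    qed
    then have "y' \<in> small_oscillation_set K f \<epsilon>"
      using small_oscillation_set_if_close_to_continuous[OF y'(1) \<open>\<eta> > 0\<close> \<open>\<epsilon> > 0\<close>]
        cont y'(1) continuous_on_eq_continuous_within by blast
    moreover have "dist y' x0 < \<delta>" using y'(2) by (simp add: dist_commute)
    ultimately show "\<exists>y\<in>small_oscillation_set K f \<epsilon>. dist y x0 < \<delta>" by blast
  qed
qed

lemma Baire_one_has_continuity_point:
  fixes K :: "'a::{real_normed_vector,heine_borel} set" and f :: "'a \<Rightarrow> 'b::metric_space"
  assumes "closed K" "K \<noteq> {}" and cont: "\<And>n. continuous_on K (g n)"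
    and lim: "\<And>x. x \<in> K \<Longrightarrow> (\<lambda>n. g n x) \<longlonglongrightarrow> f x"
  shows "\<exists>x\<in>K. continuous (at x within K) f"
proof -
  define G where "G k = small_oscillation_set K f (1 / Suc k)" for k
  have "K \<subseteq> closure (G k)" for k
    using dense_small_oscillation_set[OF \<open>closed K\<close> cont lim, of "1 / Suc k"] unfolding G_def by simp
  then have "K \<subseteq> closure (\<Inter>k. G k)"
    using openin_small_oscillation_set unfolding G_def by (intro Baire[OF \<open>closed K\<close>]) auto
  then have "(\<Inter>k. G k) \<noteq> {}" using \<open>K \<noteq> {}\<close> by auto
  then obtain x where x: "\<And>k. x \<in> G k" by blast
  then have "x \<in> K" unfolding G_def small_oscillation_set_def by blast
  have "x \<in> small_oscillation_set K f \<epsilon>" if "\<epsilon> > 0" for \<epsilon>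
  proof -
    obtain k where "1 / Suc k < \<epsilon>" using \<open>\<epsilon> > 0\<close> by (metis inverse_eq_divide reals_Archimedean)
    then show ?thesis
      using x[of k] unfolding G_def small_oscillation_set_def by fastforce
  qed
  then show ?thesis using \<open>x \<in> K\<close> continuous_within_if_small_oscillation by blast
qed

lemma baire_one_discont_set_neq:
  fixes X :: "'a::euclidean_space set" and f :: "'a \<Rightarrow> 'b::euclidean_space"
  assumes "baire_one_on E f" "closed X" "X \<subseteq> E" "X \<noteq> {}"
  shows "discont_set f X \<noteq> X"
proof -
  obtain g :: "nat \<Rightarrow> 'a \<Rightarrow> 'b" where cont: "\<And>n. continuous_on E (g n)"
    and lim: "\<And>x. x \<in> E \<Longrightarrow> (\<lambda>n. g n x) \<longlonglongrightarrow> f x"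
    using assms(1) unfolding baire_one_on_def by blast
  have "\<exists>x\<in>X. continuous (at x within X) f"
  proof (rule Baire_one_has_continuity_point[OF assms(2,4)])
    show "continuous_on X (g n)" for n using continuous_on_subset[OF cont assms(3)] .
    show "(\<lambda>n. g n x) \<longlonglongrightarrow> f x" if "x \<in> X" for x using lim assms(3) that by blast
  qed
  then show ?thesis unfolding discont_set_def by blast
qed

section \<open>Towers of a deflationary operator\<close>

inductive_set tower :: "('a set \<Rightarrow> 'a set) \<Rightarrow> 'a set \<Rightarrow> 'a set set"
  for D :: "'a set \<Rightarrow> 'a set" and E :: "'a set" where
  base: "E \<in> tower D E"
| step: "X \<in> tower D E \<Longrightarrow> D X \<in> tower D E"
| Inter: "X \<in> M \<Longrightarrow> (\<And>Y. Y \<in> M \<Longrightarrow> Y \<in> tower D E) \<Longrightarrow> \<Inter>M \<in> tower D E"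

(* (X, Y) \<in> supset_order T says that X precedes Y as an index, matching E\<^sub>\<beta> \<supseteq> E\<^sub>\<alpha> for \<beta> \<le> \<alpha>. *)
definition supset_order :: "'a set set \<Rightarrow> 'a set rel" where
  "supset_order T = {(X, Y). X \<in> T \<and> Y \<in> T \<and> Y \<subseteq> X}"

lemma Field_supset_order [simp]: "Field (supset_order T) = T"
  unfolding supset_order_def Field_def by blast

lemma Well_order_supset_order:
  assumes chain: "\<And>X Y. X \<in> T \<Longrightarrow> Y \<in> T \<Longrightarrow> X \<subseteq> Y \<or> Y \<subseteq> X"
    and largest: "\<And>M. M \<subseteq> T \<Longrightarrow> M \<noteq> {} \<Longrightarrow> \<exists>G\<in>M. \<forall>Y\<in>M. Y \<subseteq> G"
  shows "Well_order (supset_order T)"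
proof -
  have "supset_order T \<subseteq> T \<times> T" "refl_on T (supset_order T)" "trans (supset_order T)"
    "antisym (supset_order T)"
    unfolding refl_on_def trans_def antisym_def supset_order_def by auto
  moreover have "total_on T (supset_order T)"
    using chain unfolding total_on_def supset_order_def by auto
  ultimately have lin: "Linear_order (supset_order T)"
    unfolding linear_order_on_def partial_order_on_def preorder_on_def by simp
  have "\<exists>G\<in>M. \<forall>Y\<in>M. (G, Y) \<in> supset_order T" if M: "M \<subseteq> T" "M \<noteq> {}" for M
    using largest[OF M] M(1) unfolding supset_order_def by blast
  then show ?thesis
    unfolding Linear_order_Well_order_iff[OF lin] by simp
qed

context
  fixes D :: "'a set \<Rightarrow> 'a set" and E :: "'a set"
  assumes deflationary: "\<And>X. D X \<subseteq> X"
begin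

lemma tower_subset: "X \<in> tower D E \<Longrightarrow> X \<subseteq> E"
  by (induction rule: tower.induct) (use deflationary in blast)+

lemma Inter_tower_in_tower: "\<Inter>(tower D E) \<in> tower D E"
  using tower.base by (rule tower.Inter) simp

(* Zermelo's two-step induction showing that a tower is a chain. *)
lemma tower_comparable_if_below_D_of_larger:
  assumes C: "C \<in> tower D E" and below: "\<And>X. X \<in> tower D E \<Longrightarrow> C \<subset> X \<Longrightarrow> C \<subseteq> D X"
  shows "X \<in> tower D E \<Longrightarrow> C \<subseteq> X \<or> X \<subseteq> D C"
proof (induction rule: tower.induct)
  case base
  then show ?case using tower_subset[OF C] by blast
next
  case (step Y)
  consider "C = Y" | "C \<subset> Y" | "Y \<subseteq> D C" using step.IH by blast
  then show ?case using below[OF step.hyps] deflationary[of Y] by cases auto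
next
  case (Inter Y M)
  then show ?case by blast
qed

lemma tower_below_D_of_larger:
  "C \<in> tower D E \<Longrightarrow> X \<in> tower D E \<Longrightarrow> C \<subset> X \<Longrightarrow> C \<subseteq> D X"
proof (induction arbitrary: X rule: tower.induct)
  case base
  then show ?case using tower_subset by blast
next
  case (step Y)
  have "Y \<subseteq> X"
    using tower_comparable_if_below_D_of_larger[OF step.hyps step.IH step.prems(1)] step.prems(2)
    by blast
  then show ?case
    using step.IH[OF step.prems(1)] deflationary[of Y] by (cases "Y = X") auto
next
  case (Inter Y M)
  show ?case
  proof (cases "\<exists>Z\<in>M. Z \<subset> X")
    case True
    then show ?thesis using Inter.IH Inter.prems(1) by blast
  next
    case False
    have "X \<subseteq> Z" if "Z \<in> M" for Z
      using tower_comparable_if_below_D_of_larger[of Z X] Inter.IH Inter.hyps Inter.prems(1) False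
        deflationary[of Z] that by blast
    then show ?thesis using Inter.prems(2) by blast
  qed
qed

lemma tower_comparable: "C \<in> tower D E \<Longrightarrow> X \<in> tower D E \<Longrightarrow> C \<subseteq> X \<or> X \<subseteq> D C"
  using tower_comparable_if_below_D_of_larger tower_below_D_of_larger by blast

lemma tower_chain: "C \<in> tower D E \<Longrightarrow> X \<in> tower D E \<Longrightarrow> C \<subseteq> X \<or> X \<subseteq> C"
  using tower_comparable deflationary by blast

lemma tower_fixpoint_least:
  assumes X: "X \<in> tower D E" "D X = X"
  shows "Y \<in> tower D E \<Longrightarrow> X \<subseteq> Y"
proof (induction rule: tower.induct)
  case base
  then show ?case using tower_subset[OF X(1)] .
next
  case (step Y)
  show ?case
  proof (cases "Y \<subseteq> X")
    case True
    then have "Y = X" using step.IH by blast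
    then show ?thesis using X(2) by simp
  next
    case False
    then show ?thesis using tower_comparable[OF step.hyps X(1)] by blast
  qed
qed blast

lemma D_Inter_tower: "D (\<Inter>(tower D E)) = \<Inter>(tower D E)"
  using Inter_tower_in_tower tower.step deflationary by blast

lemma empty_in_tower:
  assumes "\<And>X. X \<in> tower D E \<Longrightarrow> X \<noteq> {} \<Longrightarrow> D X \<noteq> X"
  shows "{} \<in> tower D E"
  using D_Inter_tower Inter_tower_in_tower assms by metis

lemma tower_has_largest:
  assumes M: "M \<subseteq> tower D E" "M \<noteq> {}"
  shows "\<exists>G\<in>M. \<forall>Y\<in>M. Y \<subseteq> G"
proof -
  define U where "U = {X \<in> tower D E. \<forall>Y\<in>M. Y \<subseteq> X}"
  have "E \<in> U" using M(1) tower_subset tower.base unfolding U_def by blast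
  then have I: "\<Inter>U \<in> tower D E" by (rule tower.Inter) (auto simp: U_def)
  have upper: "\<forall>Y\<in>M. Y \<subseteq> \<Inter>U" unfolding U_def by blast
  show ?thesis
  proof (rule ccontr)
    assume "\<not> ?thesis"
    then have notin: "\<Inter>U \<notin> M" using upper by blast
    have "Y \<subseteq> D (\<Inter>U)" if "Y \<in> M" for Y
    proof -
      have "\<not> \<Inter>U \<subseteq> Y" using upper notin that by auto
      then show ?thesis using tower_comparable[OF I, of Y] that M(1) by blast
    qed
    then have "D (\<Inter>U) \<in> U" using tower.step[OF I] unfolding U_def by blast
    then have "D (\<Inter>U) = \<Inter>U" using deflationary by blast
    then have "\<Inter>U \<subseteq> Y" if "Y \<in> M" for Y
      using tower_fixpoint_least[OF I] M(1) that by blast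
    then have "Y = \<Inter>U" if "Y \<in> M" for Y
      using upper that by (simp add: subset_antisym)
    then show False using notin M(2) by blast
  qed
qed

lemma Well_order_supset_order_tower: "Well_order (supset_order (tower D E))"
  using tower_chain tower_has_largest by (rule Well_order_supset_order)

lemma tower_minimum:
  assumes "A \<in> tower D E" "\<forall>B. (B, A) \<in> supset_order (tower D E) \<longrightarrow> B = A"
  shows "A = E"
  using assms tower.base tower_subset unfolding supset_order_def by blast

lemma tower_successor:
  assumes "is_imm_pred (supset_order (tower D E)) B A"
  shows "A = D B"
proof -
  have B: "B \<in> tower D E" and A: "A \<in> tower D E" and "A \<subset> B"
    and imm: "\<And>C. C \<in> tower D E \<Longrightarrow> A \<subset> C \<Longrightarrow> B \<subseteq> C"
    using assms unfolding is_imm_pred_def supset_order_def by blast+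
  have "A \<subseteq> D B" using tower_comparable[OF B A] \<open>A \<subset> B\<close> by blast
  show ?thesis
  proof (rule ccontr)
    assume "A \<noteq> D B"
    then have "B \<subseteq> D B" using imm[OF tower.step[OF B]] \<open>A \<subseteq> D B\<close> by blast
    then have "D B = B" using deflationary[of B] by blast
    then have "B \<subseteq> A" using tower_fixpoint_least[OF B _ A] by blast
    then show False using \<open>A \<subset> B\<close> by blast
  qed
qed

lemma tower_limit:
  assumes A: "A \<in> tower D E"
    and no_imm: "\<not> (\<exists>B. is_imm_pred (supset_order (tower D E)) B A)"
    and pred: "\<exists>B. (B, A) \<in> supset_order (tower D E) \<and> B \<noteq> A"
  shows "A = \<Inter>{B. (B, A) \<in> supset_order (tower D E) \<and> B \<noteq> A}" (is "A = \<Inter>?P")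
proof -
  have I: "\<Inter>?P \<in> tower D E"
    using pred by (elim exE, intro tower.Inter) (auto simp: supset_order_def)
  have "A \<subseteq> \<Inter>?P" unfolding supset_order_def by blast
  moreover have "\<not> A \<subset> \<Inter>?P"
  proof
    assume "A \<subset> \<Inter>?P"
    then have "(\<Inter>?P, A) \<in> supset_order (tower D E)" "\<Inter>?P \<noteq> A"
      using I A unfolding supset_order_def by auto
    moreover have "(C, \<Inter>?P) \<in> supset_order (tower D E)" if "C \<in> ?P" for C
      using that I unfolding supset_order_def by blast
    ultimately have "is_imm_pred (supset_order (tower D E)) (\<Inter>?P) A"
      unfolding is_imm_pred_def by blast
    with no_imm show False by blast
  qed
  ultimately show ?thesis by blast
qed

end

lemma countable_tower:
  fixes E :: "'a::second_countable_topology set"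
  assumes deflationary: "\<And>X. D X \<subseteq> X"
    and closed: "\<And>X. X \<in> tower D E \<Longrightarrow> closed (D X)"
    and strict: "\<And>X. X \<in> tower D E \<Longrightarrow> X \<noteq> {} \<Longrightarrow> D X \<noteq> X"
  shows "countable (tower D E)"
proof -
  obtain B :: "'a set set" where "countable B" and basis: "topological_basis B"
    using ex_countable_basis by blast
  have "\<exists>b\<in>B. b \<inter> X \<noteq> {} \<and> b \<inter> D X = {}" if X: "X \<in> tower D E - {{}}" for X
  proof -
    obtain x where "x \<in> X" "x \<notin> D X" using strict deflationary X by blast
    moreover have "open (- D X)" using closed X by blast
    ultimately obtain b where "b \<in> B" "x \<in> b" "b \<subseteq> - D X"
      using basis topological_basisE by (metis ComplI)
    then show ?thesis using \<open>x \<in> X\<close> by blast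
  qed
  then obtain \<phi> where \<phi>: "\<And>X. X \<in> tower D E - {{}} \<Longrightarrow> \<phi> X \<in> B \<and> \<phi> X \<inter> X \<noteq> {} \<and> \<phi> X \<inter> D X = {}"
    by metis
  have "inj_on \<phi> (tower D E - {{}})"
  proof (rule inj_onI)
    fix X Y assume X: "X \<in> tower D E - {{}}" and Y: "Y \<in> tower D E - {{}}" and "\<phi> X = \<phi> Y"
    have "\<not> X \<subseteq> D Y" "\<not> Y \<subseteq> D X" using \<phi>[OF X] \<phi>[OF Y] \<open>\<phi> X = \<phi> Y\<close> by blast+
    then show "X = Y" using tower_comparable[OF deflationary] X Y by blast
  qed
  moreover have "countable (\<phi> ` (tower D E - {{}}))"
    using \<phi> \<open>countable B\<close> by (meson countable_subset image_subsetI)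
  ultimately have "countable (tower D E - {{}})" by (rule countable_image_inj_on[rotated])
  then show ?thesis by (metis countable_insert insert_Diff_single countable_subset subset_insertI)
qed

section \<open>The sequence of removed sets\<close>

lemma discont_set_subset: "discont_set f X \<subseteq> X"
  unfolding discont_set_def by blast

lemma closed_discont_set_tower:
  assumes "closed E" "solvable E f"
  shows "X \<in> tower (discont_set f) E \<Longrightarrow> closed X"
proof (induction rule: tower.induct)
  case base
  show ?case by (rule assms(1))
next
  case (step X)
  have "X \<subseteq> E" using tower_subset[OF discont_set_subset step.hyps] .
  then show ?case using step.IH assms(2) unfolding solvable_def by blast
next
  case (Inter X M)
  then show ?case by blast
qed

lemma removed_seq_tower: "removed_seq f E (supset_order (tower (discont_set f) E)) id"
  unfolding removed_seq_def Field_supset_order id_apply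
proof (intro ballI conjI allI impI)
  fix A assume A: "A \<in> tower (discont_set f) E"
  show "A = E" if "\<forall>B. (B, A) \<in> supset_order (tower (discont_set f) E) \<longrightarrow> B = A"
    using tower_minimum[OF discont_set_subset A that] .
  show "A = discont_set f B" if "is_imm_pred (supset_order (tower (discont_set f) E)) B A" for B
    using tower_successor[OF discont_set_subset that] .
  show "A = \<Inter>{B |B. (B, A) \<in> supset_order (tower (discont_set f) E) \<and> B \<noteq> A}"
    if "(\<exists>B. (B, A) \<in> supset_order (tower (discont_set f) E) \<and> B \<noteq> A) \<and>
        \<not> (\<exists>B. is_imm_pred (supset_order (tower (discont_set f) E)) B A)"
  proof -
    have "A = \<Inter>{B. (B, A) \<in> supset_order (tower (discont_set f) E) \<and> B \<noteq> A}"
      using tower_limit[OF discont_set_subset A] that by blast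
    moreover have "{B |B. (B, A) \<in> supset_order (tower (discont_set f) E) \<and> B \<noteq> A}
        = {B. (B, A) \<in> supset_order (tower (discont_set f) E) \<and> B \<noteq> A}" by blast
    ultimately show ?thesis by (simp only:)
  qed
qed

lemma dir_image_pred_iff:
  assumes "inj_on h (Field r)" "a \<in> Field r"
  shows "(b', h a) \<in> dir_image r h \<longleftrightarrow> (\<exists>b. b' = h b \<and> (b, a) \<in> r)"
  using assms inj_on_eq_iff[OF assms(1)] unfolding dir_image_def by (auto intro: FieldI2)

lemma dir_image_mem_iff:
  assumes "inj_on h (Field r)" "a \<in> Field r" "b \<in> Field r"
  shows "(h b, h a) \<in> dir_image r h \<longleftrightarrow> (b, a) \<in> r"
  using dir_image_pred_iff[OF assms(1,2)] inj_on_eq_iff[OF assms(1) _ assms(3)] FieldI1 by metis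

lemma is_imm_pred_dir_image_iff:
  assumes inj: "inj_on h (Field r)" and a: "a \<in> Field r"
  shows "is_imm_pred (dir_image r h) b' (h a) \<longleftrightarrow> (\<exists>b. b' = h b \<and> is_imm_pred r b a)"
proof
  have eq: "h c = h a \<longleftrightarrow> c = a" if "c \<in> Field r" for c
    using inj_on_eq_iff[OF inj that a] .
  assume "is_imm_pred (dir_image r h) b' (h a)"
  then obtain b where b: "b' = h b" "(b, a) \<in> r" "h b \<noteq> h a"
    and below: "\<And>c. (c, a) \<in> r \<Longrightarrow> h c \<noteq> h a \<Longrightarrow> (h c, h b) \<in> dir_image r h"
    unfolding is_imm_pred_def dir_image_pred_iff[OF inj a] by blast
  have "b \<in> Field r" using b(2) by (rule FieldI1)
  have "(c, b) \<in> r" if "(c, a) \<in> r" "c \<noteq> a" for c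
  proof -
    have "c \<in> Field r" using that(1) by (rule FieldI1)
    then have "(h c, h b) \<in> dir_image r h" using below that eq by blast
    then show ?thesis using dir_image_mem_iff[OF inj \<open>b \<in> Field r\<close> \<open>c \<in> Field r\<close>] by blast
  qed
  then have "is_imm_pred r b a" unfolding is_imm_pred_def using b(2,3) by blast
  then show "\<exists>b. b' = h b \<and> is_imm_pred r b a" using b(1) by blast
next
  assume "\<exists>b. b' = h b \<and> is_imm_pred r b a"
  then obtain b where b: "b' = h b" "(b, a) \<in> r" "b \<noteq> a"
    and below: "\<And>c. (c, a) \<in> r \<Longrightarrow> c \<noteq> a \<Longrightarrow> (c, b) \<in> r"
    unfolding is_imm_pred_def by blast
  have "b \<in> Field r" using b(2) by (rule FieldI1)
  have "(c', h b) \<in> dir_image r h" if "(c', h a) \<in> dir_image r h" "c' \<noteq> h a" for c'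
    using that below dir_image_mem_iff[OF inj \<open>b \<in> Field r\<close>] dir_image_pred_iff[OF inj a] FieldI1
    by metis
  moreover have "(h b, h a) \<in> dir_image r h" "h b \<noteq> h a"
    using b(2,3) dir_image_mem_iff[OF inj a \<open>b \<in> Field r\<close>] inj_on_eq_iff[OF inj \<open>b \<in> Field r\<close> a]
    by simp_all
  ultimately show "is_imm_pred (dir_image r h) b' (h a)"
    unfolding is_imm_pred_def b(1) by blast
qed

lemma removed_seq_dir_image:
  assumes seq: "removed_seq f E r S" and inj: "inj_on h (Field r)"
    and S': "\<And>i. i \<in> Field r \<Longrightarrow> S' (h i) = S i"
  shows "removed_seq f E (dir_image r h) S'"
  unfolding removed_seq_def dir_image_Field
proof (intro ballI conjI impI allI)
  fix a' assume "a' \<in> h ` Field r"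
  then obtain a where a: "a \<in> Field r" "a' = h a" by blast
  have min: "(\<forall>b. (b, a) \<in> r \<longrightarrow> b = a) \<Longrightarrow> S a = E"
    and succ: "\<And>b. is_imm_pred r b a \<Longrightarrow> S a = discont_set f (S b)"
    and limit: "(\<exists>b. (b, a) \<in> r \<and> b \<noteq> a) \<Longrightarrow> \<not> (\<exists>b. is_imm_pred r b a) \<Longrightarrow>
          S a = \<Inter>{S b | b. (b, a) \<in> r \<and> b \<noteq> a}"
    using seq a(1) unfolding removed_seq_def by blast+
  have Sa: "S' a' = S a" using S'[OF a(1)] a(2) by simp
  have ne: "h b \<noteq> a' \<longleftrightarrow> b \<noteq> a" if "(b, a) \<in> r" for b
    using inj_on_eq_iff[OF inj FieldI1[OF that] a(1)] a(2) by blast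
  have pred_a: "(b', a') \<in> dir_image r h \<longleftrightarrow> (\<exists>b. b' = h b \<and> (b, a) \<in> r)" for b'
    using dir_image_pred_iff[OF inj a(1)] a(2) by simp
  show "S' a' = E" if "\<forall>b'. (b', a') \<in> dir_image r h \<longrightarrow> b' = a'"
  proof -
    have "b = a" if "(b, a) \<in> r" for b
      using \<open>\<forall>b'. _\<close>[rule_format, of "h b"] pred_a ne that by blast
    then show ?thesis using min Sa by blast
  qed
  show "S' a' = discont_set f (S' b')" if imm': "is_imm_pred (dir_image r h) b' a'" for b'
  proof -
    obtain b where b: "b' = h b" "is_imm_pred r b a"
      using imm' is_imm_pred_dir_image_iff[OF inj a(1), of b'] a(2) by blast
    then have "b \<in> Field r" unfolding is_imm_pred_def by (blast intro: FieldI1)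
    then show ?thesis using succ[OF b(2)] b(1) S' Sa by simp
  qed
  show "S' a' = \<Inter>{S' b' | b'. (b', a') \<in> dir_image r h \<and> b' \<noteq> a'}"
    if limit': "(\<exists>b'. (b', a') \<in> dir_image r h \<and> b' \<noteq> a') \<and>
      \<not> (\<exists>b'. is_imm_pred (dir_image r h) b' a')"
  proof -
    obtain b' where "(b', a') \<in> dir_image r h" "b' \<noteq> a'" using limit' by blast
    then have "\<exists>b. (b, a) \<in> r \<and> b \<noteq> a" using pred_a ne by blast
    moreover have "\<not> is_imm_pred r b a" for b
      using limit' is_imm_pred_dir_image_iff[OF inj a(1), of "h b"] a(2) by blast
    ultimately have "S a = \<Inter>{S b | b. (b, a) \<in> r \<and> b \<noteq> a}" using limit by blast
    moreover have "{S' b' | b'. (b', a') \<in> dir_image r h \<and> b' \<noteq> a'} =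
        {S b | b. (b, a) \<in> r \<and> b \<noteq> a}"
      unfolding pred_a using ne S' FieldI1 by (smt (verit) Collect_cong)
    ultimately show ?thesis using Sa by simp
  qed
qed

lemma nat_indexed_removed_seq_reaching_empty:
  assumes "countable (tower (discont_set f) E)" "{} \<in> tower (discont_set f) E"
  shows "\<exists>(r :: nat rel) S a. Well_order r \<and> a \<in> Field r \<and> removed_seq f E r S \<and> S a = {}"
proof -
  define T where "T = tower (discont_set f) E"
  define h where "h = to_nat_on T"
  have "inj_on h T" unfolding h_def T_def using assms(1) by (rule inj_on_to_nat_on)
  show ?thesis
  proof (intro exI conjI)
    show "Well_order (dir_image (supset_order T) h)"
      using Well_order_supset_order_tower[OF discont_set_subset[of f]] \<open>inj_on h T\<close>
      unfolding T_def by (auto intro: Well_order_dir_image)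
    show "removed_seq f E (dir_image (supset_order T) h) (from_nat_into T)"
      unfolding T_def h_def
      by (rule removed_seq_dir_image[OF removed_seq_tower])
        (use \<open>inj_on h T\<close> assms(1) in \<open>simp_all add: T_def h_def\<close>)
    show "h {} \<in> Field (dir_image (supset_order T) h)"
      using assms(2) by (simp add: dir_image_Field T_def)
    show "from_nat_into T (h {}) = {}"
      using assms unfolding h_def T_def by simp
  qed
qed

theorem mainTheorem6:
  fixes E :: "'a::euclidean_space set" and f :: "'a \<Rightarrow> 'b::euclidean_space"
  assumes "compact_domain E" and "solvable E f"
  shows "\<exists>(r :: nat rel) (S :: nat \<Rightarrow> 'a set) a.
           Well_order r \<and> a \<in> Field r \<and> removed_seq f E r S \<and> S a = {}"
proof -
  define T where "T = tower (discont_set f) E"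
  have "closed E" using assms(1) compact_imp_closed unfolding compact_domain_def by blast
  then have closed: "X \<in> T \<Longrightarrow> closed X" for X
    using closed_discont_set_tower assms(2) unfolding T_def by blast
  have "baire_one_on E f" using assms(2) unfolding solvable_def by blast
  then have strict: "X \<in> T \<Longrightarrow> X \<noteq> {} \<Longrightarrow> discont_set f X \<noteq> X" for X
    using baire_one_discont_set_neq closed tower_subset[OF discont_set_subset[of f]]
    unfolding T_def by blast
  have "countable T"
    using countable_tower[OF discont_set_subset[of f]] closed tower.step strict unfolding T_def by blast
  moreover have "{} \<in> T"
    using empty_in_tower[OF discont_set_subset[of f]] strict unfolding T_def by blast
  ultimately show ?thesis
    unfolding T_def by (rule nat_indexed_removed_seq_reaching_empty)
qed

end
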